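(* Let $M$ be a strongly regular $po$-$\Gamma$-semigroup. Then for every $a\in M$ there exist $y\in M$ and $\gamma,\mu\in\Gamma$ such that $$a\le a\gamma y\mu a,\quad y\le y\mu a\gamma y,\quad\text{and}\quad a\gamma y=y\gamma a=y\mu a=a\mu y.$$
   Context: A $po$-$\Gamma$-semigroup is a triple $(M,\Gamma,\le)$ where $M,\Gamma$ are nonempty sets with a map $M\times\Gamma\times M\to M$, $(a,\gamma,b)\mapsto a\gamma b$, satisfying $(a\gamma b)\mu c=a\gamma(b\mu c)$ for all $a,b,c\in M$, $\gamma,\mu\in\Gamma$, and $\le$ is a partial order on $M$ such that $a\le b$ implies $a\gamma c\le b\gamma c$ and $c\gamma a\le c\gamma b$ for all $c\in M$, $\gamma\in\Gamma$. $M$ is strongly regular if for every $a\in M$ there exist $x\in M$ and $\gamma,\mu\in\Gamma$ such that $a\le a\gamma x\mu a$ and $a\gamma x=x\gamma a=x\mu a=a\mu x$. *)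

theory Defs
  imports Main
begin

definition po_gamma_semigroup ::
  "'a set \<Rightarrow> 'g set \<Rightarrow> ('a \<Rightarrow> 'g \<Rightarrow> 'a \<Rightarrow> 'a) \<Rightarrow> ('a \<Rightarrow> 'a \<Rightarrow> bool) \<Rightarrow> bool" where
  "po_gamma_semigroup M G op le \<longleftrightarrow>
     M \<noteq> {} \<and> G \<noteq> {} \<and>
     (\<forall>a\<in>M. \<forall>g\<in>G. \<forall>b\<in>M. op a g b \<in> M) \<and>
     (\<forall>a\<in>M. \<forall>b\<in>M. \<forall>c\<in>M. \<forall>g\<in>G. \<forall>m\<in>G. op (op a g b) m c = op a g (op b m c)) \<and>
     (\<forall>a\<in>M. le a a) \<and>
     (\<forall>a\<in>M. \<forall>b\<in>M. le a b \<and> le b a \<longrightarrow> a = b) \<and>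
     (\<forall>a\<in>M. \<forall>b\<in>M. \<forall>c\<in>M. le a b \<and> le b c \<longrightarrow> le a c) \<and>
     (\<forall>a\<in>M. \<forall>b\<in>M. le a b \<longrightarrow>
        (\<forall>c\<in>M. \<forall>g\<in>G. le (op a g c) (op b g c) \<and> le (op c g a) (op c g b)))"

definition strongly_regular ::
  "'a set \<Rightarrow> 'g set \<Rightarrow> ('a \<Rightarrow> 'g \<Rightarrow> 'a \<Rightarrow> 'a) \<Rightarrow> ('a \<Rightarrow> 'a \<Rightarrow> bool) \<Rightarrow> bool" where
  "strongly_regular M G op le \<longleftrightarrow>
     (\<forall>a\<in>M. \<exists>x\<in>M. \<exists>g\<in>G. \<exists>m\<in>G.
        le a (op (op a g x) m a) \<and>
        op a g x = op x g a \<and> op x g a = op x m a \<and> op x m a = op a m x)"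

end

theory Submission
  imports Defs
begin

text \<open>Let \<open>x\<close> be the element given by strong regularity, so that \<open>a\<gamma>x = x\<gamma>a = x\<mu>a = a\<mu>x\<close>.
  These identities let \<open>\<mu>\<close> be replaced by \<open>\<gamma>\<close> after any factor \<open>a\<mu>x\<close> or \<open>x\<mu>a\<close>, so all
  products below become \<open>\<gamma>\<close>-words alternating in \<open>a\<close> and \<open>x\<close>. The element \<open>y = x\<mu>a\<gamma>x\<close> is then
  the word \<open>x a x\<close>; it commutes with \<open>a\<close> in the required way because \<open>a x a x = x a x a\<close>.
  Inserting \<open>a \<le> a x a\<close> into itself gives \<open>a \<le> a x a x a\<close>, which is \<open>a \<le> a\<gamma>y\<mu>a\<close>, and
  multiplying it by \<open>x\<close> on both sides gives \<open>y \<le> x a x a x a x = y\<mu>a\<gamma>y\<close>.\<close>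

locale preordered_gamma_semigroup =
  fixes M :: "'a set" and G :: "'g set"
    and op :: "'a \<Rightarrow> 'g \<Rightarrow> 'a \<Rightarrow> 'a" and le :: "'a \<Rightarrow> 'a \<Rightarrow> bool"
  assumes closed [simp]: "\<lbrakk>a \<in> M; g \<in> G; b \<in> M\<rbrakk> \<Longrightarrow> op a g b \<in> M"
    and assoc [simp]: "\<lbrakk>a \<in> M; b \<in> M; c \<in> M; g \<in> G; m \<in> G\<rbrakk> \<Longrightarrow>
      op (op a g b) m c = op a g (op b m c)"
    and trans: "\<lbrakk>a \<in> M; b \<in> M; c \<in> M; le a b; le b c\<rbrakk> \<Longrightarrow> le a c"
    and mono_right: "\<lbrakk>a \<in> M; b \<in> M; c \<in> M; g \<in> G; le a b\<rbrakk> \<Longrightarrow> le (op a g c) (op b g c)"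
    and mono_left: "\<lbrakk>a \<in> M; b \<in> M; c \<in> M; g \<in> G; le a b\<rbrakk> \<Longrightarrow> le (op c g a) (op c g b)"
begin

lemma mono_both:
  assumes "u \<in> M" "v \<in> M" "c \<in> M" "d \<in> M" "g \<in> G" "k \<in> G" "le u v"
  shows "le (op c g (op u k d)) (op c g (op v k d))"
  using assms by (simp add: mono_left mono_right)

end

lemma po_gamma_semigroup_preordered:
  assumes "po_gamma_semigroup M G op le"
  shows "preordered_gamma_semigroup M G op le"
  using assms unfolding po_gamma_semigroup_def
  by unfold_locales meson+

locale commuting_pair = preordered_gamma_semigroup +
  fixes a x :: 'a and g m :: 'g
  assumes a_in [simp]: "a \<in> M" and x_in [simp]: "x \<in> M"
    and g_in [simp]: "g \<in> G" and m_in [simp]: "m \<in> G"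
    and ag_xg: "op a g x = op x g a"
    and xg_xm: "op x g a = op x m a"
    and xm_am: "op x m a = op a m x"
begin

lemma xm_a [simp]: "op x m a = op x g a"
  using xg_xm by (rule sym)

lemma am_x [simp]: "op a m x = op a g x"
  using ag_xg xg_xm xm_am by (simp only:)

lemma am_x_prefix [simp]: "\<lbrakk>t \<in> M; k \<in> G\<rbrakk> \<Longrightarrow> op a m (op x k t) = op a g (op x k t)"
  using assoc[of a x t m k] assoc[of a x t g k] by simp

lemma xm_a_prefix [simp]: "\<lbrakk>t \<in> M; k \<in> G\<rbrakk> \<Longrightarrow> op x m (op a k t) = op x g (op a k t)"
  using assoc[of x a t m k] assoc[of x a t g k] by simp

lemma axax_eq_xaxa: "op a g (op x g (op a g x)) = op x g (op a g (op x g a))"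
proof -
  have "op a g (op x g (op a g x)) = op (op a g x) g (op a g x)" by simp
  also have "\<dots> = op (op x g a) g (op x g a)" using ag_xg by simp
  also have "\<dots> = op x g (op a g (op x g a))" by simp
  finally show ?thesis .
qed

definition y :: 'a where "y = op (op x m a) g x"

lemma y_in: "y \<in> M"
  unfolding y_def by simp

lemma y_commutes:
  "op a g y = op y g a" "op y g a = op y m a" "op y m a = op a m y"
  unfolding y_def using axax_eq_xaxa by simp_all

lemma le_axaxa:
  assumes "le a (op (op a g x) m a)"
  shows "le a (op a g (op x g (op a g (op x g a))))"
proof -
  have axa: "le a (op a g (op x g a))" using assms by simp
  then have "le (op a g (op x g a)) (op a g (op x g (op a g (op x g a))))"
    using mono_left[OF a_in _ _ g_in axa, of "op a g x"] by simp
  from trans[OF a_in _ _ axa this] show ?thesis by simp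
qed

lemma a_le_aya:
  assumes "le a (op (op a g x) m a)"
  shows "le a (op (op a g y) m a)"
  using le_axaxa[OF assms] unfolding y_def by simp

lemma y_le_yay:
  assumes "le a (op (op a g x) m a)"
  shows "le y (op (op y m a) g y)"
  using mono_both[OF a_in _ x_in x_in g_in g_in le_axaxa[OF assms]]
  unfolding y_def by simp

end

theorem theorem8:
  fixes M :: "'a set" and G :: "'g set"
    and op :: "'a \<Rightarrow> 'g \<Rightarrow> 'a \<Rightarrow> 'a" and le :: "'a \<Rightarrow> 'a \<Rightarrow> bool"
  assumes "po_gamma_semigroup M G op le"
    and "strongly_regular M G op le"
  shows "\<forall>a\<in>M. \<exists>y\<in>M. \<exists>g\<in>G. \<exists>m\<in>G.
           le a (op (op a g y) m a) \<and> le y (op (op y m a) g y) \<and>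
           op a g y = op y g a \<and> op y g a = op y m a \<and> op y m a = op a m y"
proof
  fix a assume "a \<in> M"
  then obtain x g m where "x \<in> M" "g \<in> G" "m \<in> G"
    and reg: "le a (op (op a g x) m a)"
    and "op a g x = op x g a" "op x g a = op x m a" "op x m a = op a m x"
    using assms(2) unfolding strongly_regular_def by blast
  then interpret commuting_pair M G op le a x g m
    using po_gamma_semigroup_preordered[OF assms(1)] \<open>a \<in> M\<close>
    by (simp add: commuting_pair_def commuting_pair_axioms_def)
  show "\<exists>y\<in>M. \<exists>g\<in>G. \<exists>m\<in>G.
           le a (op (op a g y) m a) \<and> le y (op (op y m a) g y) \<and>
           op a g y = op y g a \<and> op y g a = op y m a \<and> op y m a = op a m y"
    using y_in g_in m_in a_le_aya[OF reg] y_le_yay[OF reg] y_commutes by blast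
qed

end
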